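(* Let $A$ be an integral residuated $\vee$-semilattice. Then: (1) $A$ is a $\to$-MTL-algebra if and only if the set of $\to$-prime filters of $A$ equals the set of $\vee$-prime filters of $A$; (2) $A$ is a $\leadsto$-MTL-algebra if and only if the set of $\leadsto$-prime filters of $A$ equals the set of $\vee$-prime filters of $A$; (3) $A$ is a pseudo MTL-algebra if and only if the set of prime filters of $A$ equals the set of $\vee$-prime filters of $A$.
   Context: A residuated poset is a partially ordered semigroup $(A;\cdot,\le)$ with binary operations $\to,\leadsto$ such that $x\cdot y\le z$ iff $x\le y\to z$ iff $y\le x\leadsto z$ for all $x,y,z$. It is a residuated $\vee$-semilattice if $(A,\le)$ is a join-semilattice (every pair has a supremum $x\vee y$). It is integral if it has a greatest element $1$ which is a multiplicative identity ($1\cdot x=x\cdot 1=x$). A filter of $A$ is a nonempty subset $F$ that is upward closed and closed under $\cdot$. A filter $F$ is $\to$-prime if for all $x,y\in A$, $x\to y\in F$ or $y\to x\in F$; $\leadsto$-prime if for all $x,y$, $x\leadsto y\in F$ or $y\leadsto x\in F$; prime if it is both $\to$-prime and $\leadsto$-prime; $\vee$-prime if $x\vee y\in F$ implies $x\in F$ or $y\in F$. $A$ is a $\to$-MTL-algebra if $(x\to y)\vee(y\to x)=1$ for all $x,y$; a $\leadsto$-MTL-algebra if $(x\leadsto y)\vee(y\leadsto x)=1$ for all $x,y$; a pseudo MTL-algebra if it is both. *)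

theory Defs
  imports Main
begin

text \<open>The carrier is the whole type 'a; the order is the type-class order, joins are sup,
  and the greatest element 1 is top. Multiplication m, right residual r (x \<cdot> y \<le> z iff
  x \<le> r y z, i.e. r y z = y \<rightarrow> z) and left residual l (x \<cdot> y \<le> z iff y \<le> l x z,
  i.e. l x z = x \<leadsto> z) are explicit parameters.\<close>

definition integral_residuated_sup_semilattice ::
  "('a::{semilattice_sup,order_top} \<Rightarrow> 'a \<Rightarrow> 'a) \<Rightarrow> ('a \<Rightarrow> 'a \<Rightarrow> 'a) \<Rightarrow> ('a \<Rightarrow> 'a \<Rightarrow> 'a) \<Rightarrow> bool" where
  "integral_residuated_sup_semilattice m r l \<longleftrightarrow>
     (\<forall>x y z. m (m x y) z = m x (m y z)) \<and>
     (\<forall>x y z. x \<le> y \<longrightarrow> m x z \<le> m y z \<and> m z x \<le> m z y) \<and>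
     (\<forall>x y z. (m x y \<le> z \<longleftrightarrow> x \<le> r y z) \<and> (m x y \<le> z \<longleftrightarrow> y \<le> l x z)) \<and>
     (\<forall>x. m top x = x \<and> m x top = x)"

definition is_filter :: "('a::order \<Rightarrow> 'a \<Rightarrow> 'a) \<Rightarrow> 'a set \<Rightarrow> bool" where
  "is_filter m F \<longleftrightarrow> F \<noteq> {} \<and> (\<forall>x y. x \<in> F \<and> x \<le> y \<longrightarrow> y \<in> F) \<and>
     (\<forall>x y. x \<in> F \<and> y \<in> F \<longrightarrow> m x y \<in> F)"

definition r_prime_filter :: "('a::order \<Rightarrow> 'a \<Rightarrow> 'a) \<Rightarrow> ('a \<Rightarrow> 'a \<Rightarrow> 'a) \<Rightarrow> 'a set \<Rightarrow> bool" where
  "r_prime_filter m r F \<longleftrightarrow> is_filter m F \<and> (\<forall>x y. r x y \<in> F \<or> r y x \<in> F)"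

definition l_prime_filter :: "('a::order \<Rightarrow> 'a \<Rightarrow> 'a) \<Rightarrow> ('a \<Rightarrow> 'a \<Rightarrow> 'a) \<Rightarrow> 'a set \<Rightarrow> bool" where
  "l_prime_filter m l F \<longleftrightarrow> is_filter m F \<and> (\<forall>x y. l x y \<in> F \<or> l y x \<in> F)"

definition prime_filter :: "('a::order \<Rightarrow> 'a \<Rightarrow> 'a) \<Rightarrow> ('a \<Rightarrow> 'a \<Rightarrow> 'a) \<Rightarrow> ('a \<Rightarrow> 'a \<Rightarrow> 'a) \<Rightarrow> 'a set \<Rightarrow> bool" where
  "prime_filter m r l F \<longleftrightarrow> r_prime_filter m r F \<and> l_prime_filter m l F"

definition sup_prime_filter :: "('a::semilattice_sup \<Rightarrow> 'a \<Rightarrow> 'a) \<Rightarrow> 'a set \<Rightarrow> bool" where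
  "sup_prime_filter m F \<longleftrightarrow> is_filter m F \<and> (\<forall>x y. sup x y \<in> F \<longrightarrow> x \<in> F \<or> y \<in> F)"

definition r_MTL :: "('a::{semilattice_sup,order_top} \<Rightarrow> 'a \<Rightarrow> 'a) \<Rightarrow> bool" where
  "r_MTL r \<longleftrightarrow> (\<forall>x y. sup (r x y) (r y x) = top)"

definition l_MTL :: "('a::{semilattice_sup,order_top} \<Rightarrow> 'a \<Rightarrow> 'a) \<Rightarrow> bool" where
  "l_MTL l \<longleftrightarrow> (\<forall>x y. sup (l x y) (l y x) = top)"

definition pseudo_MTL :: "('a::{semilattice_sup,order_top} \<Rightarrow> 'a \<Rightarrow> 'a) \<Rightarrow> ('a \<Rightarrow> 'a \<Rightarrow> 'a) \<Rightarrow> bool" where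
  "pseudo_MTL r l \<longleftrightarrow> r_MTL r \<and> l_MTL l"

end

theory Submission
  imports Defs
begin

text \<open>
  A filter that is \<open>\<rightarrow>\<close>-prime is \<open>\<or>\<close>-prime, because \<open>(x \<rightarrow> y)(x \<or> y) \<le> y\<close>; in a
  \<open>\<rightarrow>\<close>-MTL-algebra every filter contains \<open>(x \<rightarrow> y) \<or> (y \<rightarrow> x) = 1\<close>, so conversely every
  \<open>\<or>\<close>-prime filter is \<open>\<rightarrow>\<close>-prime. If \<open>(x \<rightarrow> y) \<or> (y \<rightarrow> x) \<noteq> 1\<close>, a prime filter theorem
  provides a \<open>\<or>\<close>-prime filter avoiding it, which then cannot be \<open>\<rightarrow>\<close>-prime.
  The prime filter theorem takes a filter \<open>M\<close> maximal among those avoiding \<open>a\<close>: if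
  \<open>x \<or> y \<in> M\<close> but \<open>x, y \<notin> M\<close>, maximality gives \<open>f \<in> M\<close> with \<open>(f x)\<^sup>n \<le> a\<close> and \<open>(f y)\<^sup>k \<le> a\<close>,
  and \<open>(f x \<or> f y)\<^sup>n\<^sup>+\<^sup>k \<le> (f x)\<^sup>n \<or> (f y)\<^sup>k\<close> puts \<open>a\<close> into \<open>M\<close>.
  The \<open>\<leadsto>\<close> case is the \<open>\<rightarrow>\<close> case for the opposite multiplication, and the statement
  about prime filters combines the two.
\<close>

definition opposite :: "('a \<Rightarrow> 'a \<Rightarrow> 'a) \<Rightarrow> 'a \<Rightarrow> 'a \<Rightarrow> 'a" where
  "opposite m x y = m y x"

fun mpower :: "('a::order_top \<Rightarrow> 'a \<Rightarrow> 'a) \<Rightarrow> 'a \<Rightarrow> nat \<Rightarrow> 'a" where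
  "mpower m x 0 = top"
| "mpower m x (Suc n) = m x (mpower m x n)"

lemma filter_top_mem: "is_filter m F \<Longrightarrow> (top::'a::order_top) \<in> F"
  unfolding is_filter_def by (metis all_not_in_conv top_greatest)

lemma filter_upward: "is_filter m F \<Longrightarrow> x \<in> F \<Longrightarrow> x \<le> y \<Longrightarrow> y \<in> F"
  unfolding is_filter_def by blast

lemma filter_mult: "is_filter m F \<Longrightarrow> x \<in> F \<Longrightarrow> y \<in> F \<Longrightarrow> m x y \<in> F"
  unfolding is_filter_def by blast

lemma filter_mpower: "is_filter m F \<Longrightarrow> x \<in> F \<Longrightarrow> mpower m x n \<in> F"
  by (induction n) (simp_all add: filter_top_mem filter_mult)

lemma is_filter_Union_chain:
  assumes "C \<noteq> {}" and "\<And>F. F \<in> C \<Longrightarrow> is_filter m F"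
    and "\<And>F G. F \<in> C \<Longrightarrow> G \<in> C \<Longrightarrow> F \<subseteq> G \<or> G \<subseteq> F"
  shows "is_filter m (\<Union>C)"
  unfolding is_filter_def
proof (intro conjI allI impI)
  show "\<Union>C \<noteq> {}"
    using assms(1,2) unfolding is_filter_def by blast
  show "y \<in> \<Union>C" if "x \<in> \<Union>C \<and> x \<le> y" for x y
    using that assms(2) filter_upward by blast
  show "m x y \<in> \<Union>C" if xy: "x \<in> \<Union>C \<and> y \<in> \<Union>C" for x y
  proof -
    obtain F G where "F \<in> C" "G \<in> C" "x \<in> F" "y \<in> G"
      using xy by blast
    then show ?thesis
      using assms(2) assms(3)[of F G] filter_mult[of m F x y] filter_mult[of m G x y] by blast
  qed
qed

context
  fixes m r l :: "'a::{semilattice_sup,order_top} \<Rightarrow> 'a \<Rightarrow> 'a"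
  assumes irs: "integral_residuated_sup_semilattice m r l"
begin

lemma mult_assoc: "m (m x y) z = m x (m y z)"
  using irs unfolding integral_residuated_sup_semilattice_def by blast

lemma mult_left_mono: "x \<le> y \<Longrightarrow> m x z \<le> m y z"
  using irs unfolding integral_residuated_sup_semilattice_def by blast

lemma mult_right_mono: "x \<le> y \<Longrightarrow> m z x \<le> m z y"
  using irs unfolding integral_residuated_sup_semilattice_def by blast

lemma residuation_right: "m x y \<le> z \<longleftrightarrow> x \<le> r y z"
  using irs unfolding integral_residuated_sup_semilattice_def by blast

lemma residuation_left: "m x y \<le> z \<longleftrightarrow> y \<le> l x z"
  using irs unfolding integral_residuated_sup_semilattice_def by blast

lemma mult_top_left [simp]: "m top x = x"
  using irs unfolding integral_residuated_sup_semilattice_def by blast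

lemma mult_top_right [simp]: "m x top = x"
  using irs unfolding integral_residuated_sup_semilattice_def by blast

lemma mult_le_left: "m x y \<le> x"
  using mult_right_mono[of y top x] by simp

lemma mult_le_right: "m x y \<le> y"
  using mult_left_mono[of x top y] by simp

lemma mult_sup_distrib_right: "m (sup x y) z = sup (m x z) (m y z)"
proof (rule antisym)
  have "x \<le> r z (sup (m x z) (m y z))" and "y \<le> r z (sup (m x z) (m y z))"
    by (simp_all flip: residuation_right)
  then show "m (sup x y) z \<le> sup (m x z) (m y z)"
    by (simp add: residuation_right)
  show "sup (m x z) (m y z) \<le> m (sup x y) z"
    by (intro sup_least mult_left_mono) simp_all
qed

lemma mult_sup_distrib_left: "m z (sup x y) = sup (m z x) (m z y)"
proof (rule antisym)
  have "x \<le> l z (sup (m z x) (m z y))" and "y \<le> l z (sup (m z x) (m z y))"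
    by (simp_all flip: residuation_left)
  then show "m z (sup x y) \<le> sup (m z x) (m z y)"
    by (simp add: residuation_left)
  show "sup (m z x) (m z y) \<le> m z (sup x y)"
    by (intro sup_least mult_right_mono) simp_all
qed

lemma r_prime_filter_imp_sup_prime: "r_prime_filter m r F \<Longrightarrow> sup_prime_filter m F"
  unfolding r_prime_filter_def sup_prime_filter_def
proof (intro conjI allI impI; elim conjE)
  fix x y
  assume F: "is_filter m F" and prime: "\<forall>x y. r x y \<in> F \<or> r y x \<in> F" and "sup x y \<in> F"
  have "m (r x y) (sup x y) \<le> y" and "m (r y x) (sup x y) \<le> x"
    by (simp_all add: mult_sup_distrib_left mult_le_right residuation_right)
  then show "x \<in> F \<or> y \<in> F"
    using prime \<open>sup x y \<in> F\<close> filter_mult[OF F] filter_upward[OF F] by blast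
qed

lemma mpower_add: "mpower m x (n + k) = m (mpower m x n) (mpower m x k)"
  by (induction n) (simp_all add: mult_assoc)

lemma mpower_mono: "x \<le> y \<Longrightarrow> mpower m x n \<le> mpower m y n"
  by (induction n) (simp_all, meson mult_left_mono mult_right_mono order_trans)

lemma mpower_sup_le: "mpower m (sup x y) (n + k) \<le> sup (mpower m x n) (mpower m y k)"
proof (induction n arbitrary: k)
  case 0
  show ?case by (simp add: le_supI1)
next
  case (Suc n)
  note outer_IH = Suc.IH
  show ?case
  proof (induction k)
    case 0
    show ?case by (simp add: le_supI2)
  next
    case (Suc k)
    let ?p = "mpower m (sup x y) (n + Suc k)"
    have "mpower m (sup x y) (Suc n + Suc k) = sup (m x ?p) (m y ?p)"
      by (simp add: mult_sup_distrib_right)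
    also have "\<dots> \<le> sup (mpower m x (Suc n)) (mpower m y (Suc k))"
    proof (rule sup_least)
      have "m x ?p \<le> m x (sup (mpower m x n) (mpower m y (Suc k)))"
        using outer_IH by (rule mult_right_mono)
      also have "\<dots> \<le> sup (mpower m x (Suc n)) (mpower m y (Suc k))"
        by (simp add: mult_sup_distrib_left mult_le_right le_supI2)
      finally show "m x ?p \<le> sup (mpower m x (Suc n)) (mpower m y (Suc k))" .
      have "m y ?p \<le> m y (sup (mpower m x (Suc n)) (mpower m y k))"
        using Suc.IH by (intro mult_right_mono) simp
      also have "\<dots> \<le> sup (mpower m x (Suc n)) (mpower m y (Suc k))"
        by (simp only: mult_sup_distrib_left mpower.simps(2) mult_le_right sup_mono order_refl)
      finally show "m y ?p \<le> sup (mpower m x (Suc n)) (mpower m y (Suc k))" .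
    qed
    finally show ?case .
  qed
qed

text \<open>In general this is smaller than the filter generated by \<open>M \<union> {x}\<close>, but it is a filter
  containing both, which is all the maximality argument needs.\<close>

definition filter_extension :: "'a set \<Rightarrow> 'a \<Rightarrow> 'a set" where
  "filter_extension M x = {z. \<exists>f\<in>M. \<exists>n. mpower m (m f x) n \<le> z}"

lemma mpower_mult_mult_le:
  "mpower m (m (m f g) x) n \<le> mpower m (m f x) n"
  "mpower m (m (m f g) x) n \<le> mpower m (m g x) n"
  by (intro mpower_mono mult_left_mono mult_le_left mult_le_right)+

lemma is_filter_filter_extension:
  assumes M: "is_filter m M"
  shows "is_filter m (filter_extension M x)"
  unfolding is_filter_def
proof (intro conjI allI impI)
  have "mpower m (m top x) 0 \<le> top" by simp
  then show "filter_extension M x \<noteq> {}"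
    using filter_top_mem[OF M] unfolding filter_extension_def by blast
  show "b \<in> filter_extension M x" if "a \<in> filter_extension M x \<and> a \<le> b" for a b
    using that order_trans unfolding filter_extension_def by blast
  show "m a b \<in> filter_extension M x"
    if ab: "a \<in> filter_extension M x \<and> b \<in> filter_extension M x" for a b
  proof -
    obtain f n g k where "f \<in> M" "mpower m (m f x) n \<le> a" "g \<in> M" "mpower m (m g x) k \<le> b"
      using ab unfolding filter_extension_def by blast
    then have "m f g \<in> M"
      using filter_mult[OF M] by blast
    moreover have "m (mpower m (m (m f g) x) n) (mpower m (m (m f g) x) k) \<le> m a b"
      using \<open>mpower m (m f x) n \<le> a\<close> \<open>mpower m (m g x) k \<le> b\<close> mpower_mult_mult_le
      by (meson mult_left_mono mult_right_mono order_trans)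
    ultimately show ?thesis
      unfolding filter_extension_def by (auto simp flip: mpower_add)
  qed
qed

lemma filter_extension_subset: "M \<subseteq> filter_extension M x"
proof
  fix f
  assume "f \<in> M"
  moreover have "mpower m (m f x) 1 \<le> f" by (simp add: mult_le_left)
  ultimately show "f \<in> filter_extension M x"
    unfolding filter_extension_def by blast
qed

lemma filter_extension_mem: "is_filter m M \<Longrightarrow> x \<in> filter_extension M x"
proof -
  assume "is_filter m M"
  moreover have "mpower m (m top x) 1 \<le> x" by simp
  ultimately show ?thesis
    using filter_top_mem unfolding filter_extension_def by blast
qed

lemma maximal_filter_avoiding_exists:
  assumes "a \<noteq> top"
  obtains M where "is_filter m M" "a \<notin> M"
    "\<And>F. is_filter m F \<Longrightarrow> a \<notin> F \<Longrightarrow> M \<subseteq> F \<Longrightarrow> F = M"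
proof -
  let ?S = "{F. is_filter m F \<and> a \<notin> F}"
  have "is_filter m {top}"
    unfolding is_filter_def by (auto simp: top_unique)
  then have "{top} \<in> ?S" using assms by simp
  then have "\<exists>M\<in>?S. \<forall>F\<in>?S. M \<subseteq> F \<longrightarrow> F = M"
  proof (intro subset_Zorn_nonempty)
    fix C
    assume "C \<noteq> {}" and "subset.chain ?S C"
    then have "is_filter m (\<Union>C)" and "a \<notin> \<Union>C"
      using is_filter_Union_chain[of C m] unfolding subset.chain_def by blast+
    then show "\<Union>C \<in> ?S" by simp
  qed blast
  then show ?thesis using that by blast
qed

lemma maximal_filter_avoiding_sup_prime:
  assumes M: "is_filter m M" and "a \<notin> M"
    and maximal: "\<And>F. is_filter m F \<Longrightarrow> a \<notin> F \<Longrightarrow> M \<subseteq> F \<Longrightarrow> F = M"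
  shows "sup_prime_filter m M"
  unfolding sup_prime_filter_def
proof (intro conjI allI impI M)
  fix x y
  assume "sup x y \<in> M"
  have extension_hits_a: "a \<in> filter_extension M z" if "z \<notin> M" for z
  proof (rule ccontr)
    assume "a \<notin> filter_extension M z"
    then have "filter_extension M z = M"
      using maximal[OF is_filter_filter_extension[OF M] _ filter_extension_subset] by blast
    then show False
      using filter_extension_mem[OF M] \<open>z \<notin> M\<close> by blast
  qed
  show "x \<in> M \<or> y \<in> M"
  proof (rule ccontr)
    assume "\<not> (x \<in> M \<or> y \<in> M)"
    then obtain f n g k where f: "f \<in> M" "mpower m (m f x) n \<le> a"
      and g: "g \<in> M" "mpower m (m g y) k \<le> a"
      using extension_hits_a unfolding filter_extension_def by blast
    define h where "h = m f g"
    have "h \<in> M"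
      unfolding h_def using filter_mult[OF M f(1) g(1)] .
    have "mpower m (m h (sup x y)) (n + k) \<le> sup (mpower m (m h x) n) (mpower m (m h y) k)"
      unfolding mult_sup_distrib_left by (rule mpower_sup_le)
    also have "\<dots> \<le> a"
      using f(2) g(2) mpower_mult_mult_le unfolding h_def by (meson order_trans le_supI)
    finally have "mpower m (m h (sup x y)) (n + k) \<le> a" .
    moreover have "mpower m (m h (sup x y)) (n + k) \<in> M"
      using filter_mpower[OF M] filter_mult[OF M] \<open>h \<in> M\<close> \<open>sup x y \<in> M\<close> by blast
    ultimately show False
      using filter_upward[OF M] \<open>a \<notin> M\<close> by blast
  qed
qed

lemma sup_prime_filter_avoiding:
  assumes "a \<noteq> top"
  obtains F where "sup_prime_filter m F" "a \<notin> F"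
  using maximal_filter_avoiding_exists[OF assms] maximal_filter_avoiding_sup_prime by metis

lemma r_MTL_iff_r_prime_filters_eq_sup_prime:
  "r_MTL r \<longleftrightarrow> {F. r_prime_filter m r F} = {F. sup_prime_filter m F}"
proof
  assume "r_MTL r"
  then have "r_prime_filter m r F" if "sup_prime_filter m F" for F
    using that filter_top_mem unfolding r_MTL_def sup_prime_filter_def r_prime_filter_def
    by metis
  then show "{F. r_prime_filter m r F} = {F. sup_prime_filter m F}"
    using r_prime_filter_imp_sup_prime by blast
next
  assume eq: "{F. r_prime_filter m r F} = {F. sup_prime_filter m F}"
  show "r_MTL r"
    unfolding r_MTL_def
  proof (intro allI, rule ccontr)
    fix x y
    assume "sup (r x y) (r y x) \<noteq> top"
    then obtain F where "sup_prime_filter m F" "sup (r x y) (r y x) \<notin> F"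
      by (rule sup_prime_filter_avoiding)
    moreover from this have "r_prime_filter m r F" using eq by blast
    ultimately show False
      unfolding r_prime_filter_def by (meson filter_upward sup_ge1 sup_ge2)
  qed
qed

lemma integral_residuated_sup_semilattice_opposite:
  "integral_residuated_sup_semilattice (opposite m) l r"
  unfolding integral_residuated_sup_semilattice_def opposite_def
  by (metis mult_assoc mult_left_mono mult_right_mono residuation_left residuation_right
      mult_top_left mult_top_right)

end

lemma is_filter_opposite: "is_filter (opposite m) F \<longleftrightarrow> is_filter m F"
  unfolding is_filter_def opposite_def by blast

lemma r_prime_filter_opposite: "r_prime_filter (opposite m) l F \<longleftrightarrow> l_prime_filter m l F"
  unfolding r_prime_filter_def l_prime_filter_def is_filter_opposite ..

lemma sup_prime_filter_opposite: "sup_prime_filter (opposite m) F \<longleftrightarrow> sup_prime_filter m F"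
  unfolding sup_prime_filter_def is_filter_opposite ..

lemma Int_eq_iff_both_eq: "A \<subseteq> C \<Longrightarrow> B \<subseteq> C \<Longrightarrow> A \<inter> B = C \<longleftrightarrow> A = C \<and> B = C"
  by blast

theorem theorem5p7:
  fixes m r l :: "'a::{semilattice_sup,order_top} \<Rightarrow> 'a \<Rightarrow> 'a"
  assumes "integral_residuated_sup_semilattice m r l"
  shows "(r_MTL r \<longleftrightarrow> {F. r_prime_filter m r F} = {F. sup_prime_filter m F})
       \<and> (l_MTL l \<longleftrightarrow> {F. l_prime_filter m l F} = {F. sup_prime_filter m F})
       \<and> (pseudo_MTL r l \<longleftrightarrow> {F. prime_filter m r l F} = {F. sup_prime_filter m F})"
proof -
  have irs_opposite: "integral_residuated_sup_semilattice (opposite m) l r"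
    using assms by (rule integral_residuated_sup_semilattice_opposite)
  have r_part: "r_MTL r \<longleftrightarrow> {F. r_prime_filter m r F} = {F. sup_prime_filter m F}"
    using assms by (rule r_MTL_iff_r_prime_filters_eq_sup_prime)
  have l_part: "l_MTL l \<longleftrightarrow> {F. l_prime_filter m l F} = {F. sup_prime_filter m F}"
    using r_MTL_iff_r_prime_filters_eq_sup_prime[OF irs_opposite]
    by (simp add: r_MTL_def l_MTL_def r_prime_filter_opposite sup_prime_filter_opposite)
  have "{F. r_prime_filter m r F} \<subseteq> {F. sup_prime_filter m F}"
    using r_prime_filter_imp_sup_prime[OF assms] by blast
  moreover have "{F. l_prime_filter m l F} \<subseteq> {F. sup_prime_filter m F}"
    using r_prime_filter_imp_sup_prime[OF irs_opposite]
    by (auto simp: r_prime_filter_opposite sup_prime_filter_opposite)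
  moreover have "{F. prime_filter m r l F} = {F. r_prime_filter m r F} \<inter> {F. l_prime_filter m l F}"
    unfolding prime_filter_def by blast
  ultimately have "pseudo_MTL r l \<longleftrightarrow> {F. prime_filter m r l F} = {F. sup_prime_filter m F}"
    unfolding pseudo_MTL_def r_part l_part by (simp only: Int_eq_iff_both_eq)
  with r_part l_part show ?thesis by blast
qed

end
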